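(* Consider a tree power network $(\mathcal{V},\mathcal{E})$, $\mathcal{V}=\{1,\dots,n\}$, with fixed voltage magnitudes $|V_i|=\overline{V}_i>0$, angle limits $\underline{\theta}_{ik}\in[-\pi,0]$, $\overline{\theta}_{ik}\in[0,\pi]$ on each line, and bus power bounds $\underline{P}_i\le P_i\le\overline{P}_i$. Let $\mathcal{P}=\mathcal{P}_\theta\cap\mathcal{P}_P$, suppose $\mathcal{P}\neq\emptyset$, and assume $$-\tan^{-1}\!\Big(\frac{b_{ik}}{g_{ik}}\Big)<\underline{\theta}_{ik}\le\overline{\theta}_{ik}<\tan^{-1}\!\Big(\frac{b_{ik}}{g_{ik}}\Big)\quad\text{for all }(i,k)\in\mathcal{E}.$$ Then $\mathcal{O}(\mathcal{P})=\mathcal{O}(\mathrm{conv}(\mathcal{P}_\theta)\cap\mathcal{P}_P)$.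
   Context: Each line $(i,k)\in\mathcal{E}$ has admittance $y_{ik}=g_{ik}-jb_{ik}$ with $g_{ik},b_{ik}\ge0$. For $\theta_{ik}=\theta_i-\theta_k$ (difference of bus voltage phases), the line flows are $P_{ik}=\overline{V}_i^2 g_{ik}+\overline{V}_i\overline{V}_k b_{ik}\sin\theta_{ik}-\overline{V}_i\overline{V}_k g_{ik}\cos\theta_{ik}$ and $P_{ki}=\overline{V}_k^2 g_{ik}-\overline{V}_i\overline{V}_k b_{ik}\sin\theta_{ik}-\overline{V}_i\overline{V}_k g_{ik}\cos\theta_{ik}$. The angle-constrained flow region of line $(i,k)$, $\mathcal{F}_{\theta_{ik}}\subset\mathbb{R}^2$, is the set of $(P_{ik},P_{ki})$ as $\theta_{ik}$ ranges over $[\underline{\theta}_{ik},\overline{\theta}_{ik}]$; $\mathcal{F}_\theta=\prod_{(i,k)\in\mathcal{E}}\mathcal{F}_{\theta_{ik}}$. $\mathbf{A}$ is the $n\times2|\mathcal{E}|$ matrix with $A(i,(k,l))=1$ if $i=k$ and $0$ otherwise, so $(\mathbf{A}\mathbf{f})_i=\sum_{k\sim i}P_{ik}$. $\mathcal{P}_\theta=\mathbf{A}\mathcal{F}_\theta$ and $\mathcal{P}_P=\{\mathbf{p}\in\mathbb{R}^n:\underline{P}_i\le P_i\le\overline{P}_i\ \forall i\}$. For $\mathcal{A}\subseteq\mathbb{R}^m$, $\mathcal{O}(\mathcal{A})$ is the set of Pareto-optimal points (no $y\in\mathcal{A}$ with $y\le x$ componentwise, strict in some coordinate); $\mathrm{conv}$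 denotes convex hull. *)

theory Defs
  imports "HOL-Analysis.Analysis"
begin

text \<open>Power network on a finite bus type 'v (buses 1..n, n = CARD('v)).
  E is a set of lines, each line stored once as an ordered pair (i,k).\<close>

definition adj :: "('v \<times> 'v) set \<Rightarrow> 'v \<Rightarrow> 'v \<Rightarrow> bool" where
  "adj E i k \<longleftrightarrow> (i, k) \<in> E \<or> (k, i) \<in> E"

definition is_tree :: "('v::finite \<times> 'v) set \<Rightarrow> bool" where
  "is_tree E \<longleftrightarrow>
     (\<forall>i. (i, i) \<notin> E) \<and>
     (\<forall>i k. (i, k) \<in> E \<longrightarrow> (k, i) \<notin> E) \<and>
     (\<forall>i k. (adj E)\<^sup>*\<^sup>* i k) \<and>
     card E = CARD('v) - 1"

definition flow_ik :: "('v \<Rightarrow> real) \<Rightarrow> real \<Rightarrow> real \<Rightarrow> 'v \<Rightarrow> 'v \<Rightarrow> real \<Rightarrow> real" where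
  "flow_ik V g b i k t = (V i)\<^sup>2 * g + V i * V k * b * sin t - V i * V k * g * cos t"

definition flow_ki :: "('v \<Rightarrow> real) \<Rightarrow> real \<Rightarrow> real \<Rightarrow> 'v \<Rightarrow> 'v \<Rightarrow> real \<Rightarrow> real" where
  "flow_ki V g b i k t = (V k)\<^sup>2 * g - V i * V k * b * sin t - V i * V k * g * cos t"

text \<open>F_theta: product over lines of the angle-constrained flow regions; a flow vector
  is a function on directed line ends (i,k), (k,i), zero elsewhere.\<close>
definition F_theta ::
  "('v \<times> 'v) set \<Rightarrow> ('v \<Rightarrow> real) \<Rightarrow> ('v \<times> 'v \<Rightarrow> real) \<Rightarrow> ('v \<times> 'v \<Rightarrow> real)
   \<Rightarrow> ('v \<times> 'v \<Rightarrow> real) \<Rightarrow> ('v \<times> 'v \<Rightarrow> real) \<Rightarrow> ('v \<times> 'v \<Rightarrow> real) set" where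
  "F_theta E V g b thlo thhi =
     {f. (\<forall>(i, k) \<in> E. \<exists>t \<in> {thlo (i, k) .. thhi (i, k)}.
            f (i, k) = flow_ik V (g (i, k)) (b (i, k)) i k t \<and>
            f (k, i) = flow_ki V (g (i, k)) (b (i, k)) i k t) \<and>
         (\<forall>i k. \<not> adj E i k \<longrightarrow> f (i, k) = 0)}"

definition A_map :: "('v::finite \<times> 'v) set \<Rightarrow> ('v \<times> 'v \<Rightarrow> real) \<Rightarrow> real ^ 'v" where
  "A_map E f = (\<chi> i. \<Sum>k\<in>{k. adj E i k}. f (i, k))"

definition P_theta where
  "P_theta E V g b thlo thhi = A_map E ` F_theta E V g b thlo thhi"

definition P_P :: "('v::finite \<Rightarrow> real) \<Rightarrow> ('v \<Rightarrow> real) \<Rightarrow> (real ^ 'v) set" where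
  "P_P Plo Phi = {p. \<forall>i. Plo i \<le> p $ i \<and> p $ i \<le> Phi i}"

definition pareto :: "(real ^ 'v) set \<Rightarrow> (real ^ 'v) set" where
  "pareto S = {x \<in> S. \<not> (\<exists>y \<in> S. (\<forall>i. y $ i \<le> x $ i) \<and> (\<exists>i. y $ i < x $ i))}"

text \<open>tan^{-1}(b/g), with the convention tan^{-1}(b/0) = pi/2 (lossless line, b > 0).\<close>
definition angle_bound :: "real \<Rightarrow> real \<Rightarrow> real" where
  "angle_bound g b = (if g = 0 then pi / 2 else arctan (b / g))"

end

theory Submission
  imports Defs
begin

text \<open>
  Write \<open>P_\<theta>\<close> as the image of the box of admissible line angles under the map
  sending angles to bus injections. Two facts make the Pareto fronts agree.

  First, every point of \<open>conv P_\<theta>\<close> is dominated componentwise by a point of \<open>P_\<theta>\<close>.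
  Inside \<open>(-\<pi>/2, \<pi>/2)\<close> both line flows are affine in \<open>(sin \<theta>, cos \<theta>)\<close> with a
  nonpositive coefficient of \<open>cos \<theta>\<close>. Replacing a convex combination of two angles by
  the angle whose sine is the combined sine keeps the sine part and can only raise the
  cosine, because a convex combination of unit vectors has norm at most one; so the upward
  closure of \<open>P_\<theta>\<close> is convex.

  Second, on a tree, if some angles give injections \<open>\<ge> L\<close> and some give injections
  \<open>\<le> U\<close> with \<open>L \<le> U\<close>, then some angles give injections in \<open>[L, U]\<close>. The angle bounds
  make the flow at one end of a line increasing and at the other end decreasing in the
  angle. Remove a leaf: its injection is the flow on its one line, so the admissible
  angles of that line form an interval, and the share of the neighbour ranges over an
  interval too; shifting the neighbour's bounds by that interval reduces to the smaller
  tree.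

  Consequently every point of \<open>conv P_\<theta> \<inter> P_P\<close> is dominated by a point of
  \<open>P_\<theta> \<inter> P_P\<close>, which forces the two sets to have the same Pareto-optimal points.
\<close>

section \<open>Windows of oppositely monotone functions\<close>

lemma mono_antimono_window:
  fixes \<phi> \<psi> :: "real \<Rightarrow> real"
  assumes cont: "continuous_on {a..b} \<phi>" "continuous_on {a..b} \<psi>"
    and mono: "\<And>s t. a \<le> s \<Longrightarrow> s \<le> t \<Longrightarrow> t \<le> b \<Longrightarrow> \<phi> s \<le> \<phi> t \<and> \<psi> t \<le> \<psi> s"
    and th: "th \<in> {a..b}" "L \<le> \<phi> th" and tx: "tx \<in> {a..b}" "\<phi> tx \<le> U" and "L \<le> U"
  defines "T \<equiv> {t \<in> {a..b}. L \<le> \<phi> t \<and> \<phi> t \<le> U}"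
  obtains ta tb where "ta \<in> T" "tb \<in> T" "\<psi> th \<le> \<psi> ta" "\<psi> tb \<le> \<psi> tx" "\<psi> tb \<le> \<psi> ta"
    "{\<psi> tb..\<psi> ta} \<subseteq> \<psi> ` T"
proof -
  have "is_interval T"
    unfolding is_interval_1
  proof (intro ballI allI impI)
    fix s t x assume "s \<in> T" "t \<in> T" "s \<le> x \<and> x \<le> t"
    then show "x \<in> T"
      using mono[of s x] mono[of x t] unfolding T_def by auto
  qed
  then have "connected (\<psi> ` T)"
    using cont(2) by (intro connected_continuous_image)
      (auto simp: is_interval_connected T_def intro: continuous_on_subset)
  then have window: "{\<psi> tb..\<psi> ta} \<subseteq> \<psi> ` T" if "ta \<in> T" "tb \<in> T" for ta tb
    using that by (intro connected_contains_Icc) auto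
  show thesis
  proof (cases "tx \<le> th")
    case True
    have "continuous_on {tx..th} \<phi>"
      using cont(1) tx th by (auto intro: continuous_on_subset)
    then obtain t where t: "tx \<le> t" "t \<le> th" "\<phi> t = max L (\<phi> tx)"
      using IVT'[of \<phi> tx "max L (\<phi> tx)" th] True mono th tx by auto
    then have "t \<in> T" "\<psi> th \<le> \<psi> t" "\<psi> t \<le> \<psi> tx"
      using mono th tx \<open>L \<le> U\<close> unfolding T_def by auto
    then show thesis using window[of t t] by (intro that[of t t]) auto
  next
    case False
    then have "th \<in> T" "tx \<in> T" "\<psi> tx \<le> \<psi> th"
      using mono[of th tx] th tx unfolding T_def by auto
    then show thesis using window[of th tx] by (intro that[of th tx]) auto
  qed
qed

text \<open>Reduced to the previous lemma by the reflection \<open>t \<mapsto> -t\<close>.\<close>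

lemma antimono_mono_window:
  fixes \<phi> \<psi> :: "real \<Rightarrow> real"
  assumes cont: "continuous_on {a..b} \<phi>" "continuous_on {a..b} \<psi>"
    and anti: "\<And>s t. a \<le> s \<Longrightarrow> s \<le> t \<Longrightarrow> t \<le> b \<Longrightarrow> \<phi> t \<le> \<phi> s \<and> \<psi> s \<le> \<psi> t"
    and th: "th \<in> {a..b}" "L \<le> \<phi> th" and tx: "tx \<in> {a..b}" "\<phi> tx \<le> U" and "L \<le> U"
  defines "T \<equiv> {t \<in> {a..b}. L \<le> \<phi> t \<and> \<phi> t \<le> U}"
  obtains ta tb where "ta \<in> T" "tb \<in> T" "\<psi> th \<le> \<psi> ta" "\<psi> tb \<le> \<psi> tx" "\<psi> tb \<le> \<psi> ta"
    "{\<psi> tb..\<psi> ta} \<subseteq> \<psi> ` T"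
proof -
  define T' where "T' = {t \<in> {-b..-a}. L \<le> \<phi> (- t) \<and> \<phi> (- t) \<le> U}"
  have reflect: "uminus ` T' = T"
  proof (intro equalityI image_subsetI subsetI)
    show "- t \<in> T" if "t \<in> T'" for t using that unfolding T_def T'_def by auto
    show "t \<in> uminus ` T'" if "t \<in> T" for t
      using that unfolding T_def T'_def by (intro image_eqI[of _ _ "- t"]) auto
  qed
  have cont': "continuous_on {-b..-a} (\<lambda>t. \<phi> (- t))" "continuous_on {-b..-a} (\<lambda>t. \<psi> (- t))"
    by (intro continuous_on_compose2[OF cont(1)] continuous_on_compose2[OF cont(2)]
        continuous_intros; force)+
  have mono': "\<phi> (- s) \<le> \<phi> (- t) \<and> \<psi> (- t) \<le> \<psi> (- s)" if "-b \<le> s" "s \<le> t" "t \<le> -a" for s t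
    using anti[of "-t" "-s"] that by simp
  obtain ta tb where "ta \<in> T'" "tb \<in> T'"
      and \<psi>: "\<psi> th \<le> \<psi> (- ta)" "\<psi> (- tb) \<le> \<psi> tx" "\<psi> (- tb) \<le> \<psi> (- ta)"
      and window: "{\<psi> (- tb)..\<psi> (- ta)} \<subseteq> (\<lambda>t. \<psi> (- t)) ` T'"
    by (rule mono_antimono_window[OF cont' mono', of "- th" L "- tx" U, folded T'_def])
      (use th tx \<open>L \<le> U\<close> in auto)
  have mem: "- ta \<in> T" "- tb \<in> T"
    using \<open>ta \<in> T'\<close> \<open>tb \<in> T'\<close> reflect by blast+
  have "(\<lambda>t. \<psi> (- t)) ` T' = \<psi> ` T"
    unfolding reflect[symmetric] image_image ..
  with window have "{\<psi> (- tb)..\<psi> (- ta)} \<subseteq> \<psi> ` T" by (simp only:)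
  then show thesis by (rule that[OF mem \<psi>])
qed

section \<open>Trees and their leaves\<close>

definition tree_on :: "'v set \<Rightarrow> ('v \<times> 'v) set \<Rightarrow> bool" where
  "tree_on S E \<longleftrightarrow>
     (\<forall>e\<in>E. fst e \<in> S \<and> snd e \<in> S \<and> fst e \<noteq> snd e) \<and>
     (\<forall>i\<in>S. \<forall>k\<in>S. (adj E)\<^sup>*\<^sup>* i k) \<and>
     card E + 1 = card S"

lemma is_tree_imp_tree_on:
  fixes E :: "('v::finite \<times> 'v) set"
  assumes "is_tree E"
  shows "tree_on UNIV E"
proof -
  have "fst e \<noteq> snd e" if "e \<in> E" for e
    using assms that unfolding is_tree_def by (cases e) auto
  moreover have "CARD('v) > 0" by simp
  ultimately show ?thesis
    using assms unfolding is_tree_def tree_on_def by simp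
qed

lemma sum_card_fibres:
  assumes "finite S" "finite E" "f ` E \<subseteq> S"
  shows "(\<Sum>v\<in>S. card {e\<in>E. f e = v}) = card E"
proof -
  have "E = (\<Union>v\<in>S. {e\<in>E. f e = v})" using assms(3) by auto
  moreover have "card (\<Union>v\<in>S. {e\<in>E. f e = v}) = (\<Sum>v\<in>S. card {e\<in>E. f e = v})"
    using assms by (intro card_UN_disjoint) auto
  ultimately show ?thesis by simp
qed

lemma sum_card_incident_le:
  assumes "finite S" "finite E" "\<forall>e\<in>E. fst e \<in> S \<and> snd e \<in> S"
  shows "(\<Sum>v\<in>S. card {e\<in>E. fst e = v \<or> snd e = v}) \<le> 2 * card E"
proof -
  have "card {e\<in>E. fst e = v \<or> snd e = v} \<le> card {e\<in>E. fst e = v} + card {e\<in>E. snd e = v}" for v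
  proof -
    have "{e\<in>E. fst e = v \<or> snd e = v} = {e\<in>E. fst e = v} \<union> {e\<in>E. snd e = v}" by auto
    then show ?thesis by (simp add: card_Un_le)
  qed
  then have "(\<Sum>v\<in>S. card {e\<in>E. fst e = v \<or> snd e = v})
      \<le> (\<Sum>v\<in>S. card {e\<in>E. fst e = v}) + (\<Sum>v\<in>S. card {e\<in>E. snd e = v})"
    by (simp add: sum.distrib[symmetric] sum_mono)
  also have "\<dots> = 2 * card E"
    using assms by (simp add: sum_card_fibres image_subset_iff)
  finally show ?thesis .
qed

lemma tree_on_has_leaf:
  fixes E :: "('v::finite \<times> 'v) set"
  assumes tree: "tree_on S E" and "E \<noteq> {}"
  obtains l e where "l \<in> S" "e \<in> E" "fst e = l \<or> snd e = l"
    "\<And>e'. e' \<in> E - {e} \<Longrightarrow> fst e' \<noteq> l \<and> snd e' \<noteq> l"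
proof -
  note leaf = that
  define I where "I v = {e\<in>E. fst e = v \<or> snd e = v}" for v
  have ends: "\<forall>e\<in>E. fst e \<in> S \<and> snd e \<in> S \<and> fst e \<noteq> snd e"
    and conn: "\<forall>i\<in>S. \<forall>k\<in>S. (adj E)\<^sup>*\<^sup>* i k" and card: "card E + 1 = card S"
    using tree unfolding tree_on_def by auto
  have "card E > 0" using \<open>E \<noteq> {}\<close> by (simp add: card_gt_0_iff)
  show thesis
  proof (rule ccontr)
    assume no_leaf: "\<not> thesis"
    have "2 \<le> card (I v)" if "v \<in> S" for v
    proof -
      have "card (S - {v}) > 0" using card \<open>card E > 0\<close> \<open>v \<in> S\<close> by simp
      then obtain w where "w \<in> S" "w \<noteq> v" by (auto simp: card_gt_0_iff)
      then obtain y where "adj E v y"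
        using conn \<open>v \<in> S\<close> by (metis converse_rtranclpE)
      then obtain e where e: "e \<in> I v" unfolding adj_def I_def by force
      have "I v \<noteq> {e}"
      proof
        assume "I v = {e}"
        then have thesis
          using \<open>v \<in> S\<close> by (intro leaf[of v e]) (auto simp: I_def)
        then show False using no_leaf by simp
      qed
      then obtain e' where "e' \<in> I v" "e' \<noteq> e" using e by blast
      then have "card {e, e'} \<le> card (I v)" using e by (intro card_mono) (auto simp: I_def)
      then show ?thesis using \<open>e' \<noteq> e\<close> by simp
    qed
    then have "2 * card S \<le> (\<Sum>v\<in>S. card (I v))"
      using sum_mono[of S "\<lambda>_. 2::nat" "\<lambda>v. card (I v)"] by (simp add: mult.commute)
    also have "\<dots> \<le> 2 * card E"
      unfolding I_def using ends by (intro sum_card_incident_le) auto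
    finally show False using card by simp
  qed
qed

lemma rtranclp_adj_remove_leaf:
  assumes "(adj E)\<^sup>*\<^sup>* x y" "x \<noteq> l" and e: "e \<in> E" "e = (l, p) \<or> e = (p, l)"
    and away: "\<And>e'. e' \<in> E - {e} \<Longrightarrow> fst e' \<noteq> l \<and> snd e' \<noteq> l"
  shows "(adj (E - {e}))\<^sup>*\<^sup>* x (if y = l then p else y)"
  using assms(1)
proof (induction rule: rtranclp_induct)
  case base
  then show ?case using \<open>x \<noteq> l\<close> by simp
next
  case (step y z)
  from \<open>adj E y z\<close> obtain e' where e': "e' \<in> E" "e' = (y, z) \<or> e' = (z, y)"
    unfolding adj_def by auto
  show ?case
  proof (cases "e' = e")
    case True
    then show ?thesis using step.IH e e' by auto
  next
    case False
    then have "y \<noteq> l" "z \<noteq> l" "adj (E - {e}) y z"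
      using away[of e'] e' unfolding adj_def by auto
    then show ?thesis using step.IH by (simp add: rtranclp.rtrancl_into_rtrancl)
  qed
qed

lemma tree_on_remove_leaf:
  fixes E :: "('v::finite \<times> 'v) set"
  assumes tree: "tree_on S E" and "E \<noteq> {}"
  obtains l p e where "l \<in> S" "p \<in> S" "l \<noteq> p" "e \<in> E" "e = (l, p) \<or> e = (p, l)"
    "\<And>e'. e' \<in> E - {e} \<Longrightarrow> fst e' \<noteq> l \<and> snd e' \<noteq> l"
    "tree_on (S - {l}) (E - {e})"
proof -
  have ends: "\<forall>e\<in>E. fst e \<in> S \<and> snd e \<in> S \<and> fst e \<noteq> snd e"
    and conn: "\<forall>i\<in>S. \<forall>k\<in>S. (adj E)\<^sup>*\<^sup>* i k" and card: "card E + 1 = card S"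
    using tree unfolding tree_on_def by auto
  obtain l e where "l \<in> S" "e \<in> E" "fst e = l \<or> snd e = l"
    and away: "\<And>e'. e' \<in> E - {e} \<Longrightarrow> fst e' \<noteq> l \<and> snd e' \<noteq> l"
    using tree_on_has_leaf[OF assms] by blast
  define p where "p = (if fst e = l then snd e else fst e)"
  have e: "e = (l, p) \<or> e = (p, l)" and "p \<in> S" "l \<noteq> p"
    using \<open>fst e = l \<or> snd e = l\<close> ends \<open>e \<in> E\<close> unfolding p_def by (auto simp: prod_eq_iff)
  have "\<forall>e'\<in>E - {e}. fst e' \<in> S - {l} \<and> snd e' \<in> S - {l} \<and> fst e' \<noteq> snd e'"
    using ends away by blast
  moreover have "\<forall>i\<in>S - {l}. \<forall>k\<in>S - {l}. (adj (E - {e}))\<^sup>*\<^sup>* i k"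
  proof (intro ballI)
    fix i k assume "i \<in> S - {l}" "k \<in> S - {l}"
    with conn have "(adj E)\<^sup>*\<^sup>* i k" "i \<noteq> l" "k \<noteq> l" by auto
    from rtranclp_adj_remove_leaf[OF this(1,2) \<open>e \<in> E\<close> e away] \<open>k \<noteq> l\<close>
    show "(adj (E - {e}))\<^sup>*\<^sup>* i k" by simp
  qed
  moreover have "card (E - {e}) + 1 = card (S - {l})"
    using card \<open>e \<in> E\<close> \<open>l \<in> S\<close> card_gt_0_iff[of E] by (auto simp: card_Diff_singleton)
  ultimately have "tree_on (S - {l}) (E - {e})"
    unfolding tree_on_def by blast
  with away show thesis
    by (rule that[OF \<open>l \<in> S\<close> \<open>p \<in> S\<close> \<open>l \<noteq> p\<close> \<open>e \<in> E\<close> e])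
qed

text \<open>\<open>u e s\<close> and \<open>w e s\<close> are the flows into line \<open>e\<close> at its first and at its second
  endpoint when its angle is \<open>s\<close>.\<close>

definition line_injection ::
  "('v \<times> 'v \<Rightarrow> real \<Rightarrow> real) \<Rightarrow> ('v \<times> 'v \<Rightarrow> real \<Rightarrow> real) \<Rightarrow> 'v \<times> 'v \<Rightarrow> real \<Rightarrow> 'v \<Rightarrow> real" where
  "line_injection u w e s v = (if v = fst e then u e s else 0) + (if v = snd e then w e s else 0)"

definition bus_injection ::
  "('v \<times> 'v \<Rightarrow> real \<Rightarrow> real) \<Rightarrow> ('v \<times> 'v \<Rightarrow> real \<Rightarrow> real) \<Rightarrow> ('v \<times> 'v) set
     \<Rightarrow> ('v \<times> 'v \<Rightarrow> real) \<Rightarrow> 'v \<Rightarrow> real" where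
  "bus_injection u w E t v = (\<Sum>e\<in>E. line_injection u w e (t e) v)"

definition angle_box :: "'e set \<Rightarrow> ('e \<Rightarrow> real) \<Rightarrow> ('e \<Rightarrow> real) \<Rightarrow> ('e \<Rightarrow> real) set" where
  "angle_box E lo hi = {t. \<forall>e\<in>E. lo e \<le> t e \<and> t e \<le> hi e}"

lemma bus_injection_cong:
  "(\<And>e. e \<in> E \<Longrightarrow> t e = t' e) \<Longrightarrow> bus_injection u w E t v = bus_injection u w E t' v"
  unfolding bus_injection_def by (auto intro: sum.cong)

lemma bus_injection_remove_leaf:
  fixes E :: "('v::finite \<times> 'v) set"
  assumes "e \<in> E" "e = (l, p) \<or> e = (p, l)"
    and away: "\<And>e'. e' \<in> E - {e} \<Longrightarrow> fst e' \<noteq> l \<and> snd e' \<noteq> l"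
  shows "bus_injection u w E t l = line_injection u w e (t e) l"
    and "v \<noteq> l \<Longrightarrow> bus_injection u w E t v = bus_injection u w (E - {e}) t v
           + (if v = p then line_injection u w e (t e) p else 0)"
proof -
  have split: "bus_injection u w E t v = bus_injection u w (E - {e}) t v + line_injection u w e (t e) v"
    for v unfolding bus_injection_def using \<open>e \<in> E\<close> by (simp add: sum.remove)
  have "bus_injection u w (E - {e}) t l = 0"
    unfolding bus_injection_def
  proof (intro sum.neutral ballI)
    fix e' assume "e' \<in> E - {e}"
    then show "line_injection u w e' (t e') l = 0"
      using away[of e'] unfolding line_injection_def by auto
  qed
  then show "bus_injection u w E t l = line_injection u w e (t e) l" using split by simp
  show "bus_injection u w E t v = bus_injection u w (E - {e}) t v
      + (if v = p then line_injection u w e (t e) p else 0)" if "v \<noteq> l"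
    using split[of v] that assms(2) unfolding line_injection_def by auto
qed

lemma leaf_line_window:
  assumes e: "e = (l, p) \<or> e = (p, l)" "l \<noteq> p"
    and cont: "continuous_on {lo..hi} (u e)" "continuous_on {lo..hi} (w e)"
    and mono: "\<And>s t. lo \<le> s \<Longrightarrow> s \<le> t \<Longrightarrow> t \<le> hi \<Longrightarrow> u e s \<le> u e t \<and> w e t \<le> w e s"
    and th: "th \<in> {lo..hi}" "L \<le> line_injection u w e th l"
    and tx: "tx \<in> {lo..hi}" "line_injection u w e tx l \<le> U" and "L \<le> U"
  defines "\<psi> \<equiv> \<lambda>s. line_injection u w e s p"
    and "T \<equiv> {t \<in> {lo..hi}. L \<le> line_injection u w e t l \<and> line_injection u w e t l \<le> U}"
  obtains ta tb where "ta \<in> T" "tb \<in> T" "\<psi> th \<le> \<psi> ta" "\<psi> tb \<le> \<psi> tx" "\<psi> tb \<le> \<psi> ta"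
    "{\<psi> tb..\<psi> ta} \<subseteq> \<psi> ` T"
  using e(1)
proof
  assume "e = (l, p)"
  then have eqs: "(\<lambda>s. line_injection u w e s l) = u e" "\<psi> = w e"
    using e(2) unfolding \<psi>_def line_injection_def by auto
  have "continuous_on {lo..hi} (\<lambda>s. line_injection u w e s l)" "continuous_on {lo..hi} \<psi>"
    using cont unfolding eqs .
  moreover have "line_injection u w e s l \<le> line_injection u w e t l \<and> \<psi> t \<le> \<psi> s"
    if "lo \<le> s" "s \<le> t" "t \<le> hi" for s t
    using mono[OF that] fun_cong[OF eqs(1)] unfolding eqs(2) by simp
  ultimately show thesis
    using mono_antimono_window[of lo hi _ \<psi>, OF _ _ _ th tx \<open>L \<le> U\<close>, folded T_def] that by blast
next
  assume "e = (p, l)"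
  then have eqs: "(\<lambda>s. line_injection u w e s l) = w e" "\<psi> = u e"
    using e(2) unfolding \<psi>_def line_injection_def by auto
  have "continuous_on {lo..hi} (\<lambda>s. line_injection u w e s l)" "continuous_on {lo..hi} \<psi>"
    using cont(2,1) unfolding eqs .
  moreover have "line_injection u w e t l \<le> line_injection u w e s l \<and> \<psi> s \<le> \<psi> t"
    if "lo \<le> s" "s \<le> t" "t \<le> hi" for s t
    using mono[OF that] fun_cong[OF eqs(1)] unfolding eqs(2) by simp
  ultimately show thesis
    using antimono_mono_window[of lo hi _ \<psi>, OF _ _ _ th tx \<open>L \<le> U\<close>, folded T_def] that by blast
qed

lemma bus_injection_between_extend_leaf:
  fixes E :: "('v::finite \<times> 'v) set" and u w :: "'v \<times> 'v \<Rightarrow> real \<Rightarrow> real"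
    and lo hi :: "'v \<times> 'v \<Rightarrow> real" and L U :: "'v \<Rightarrow> real" and e :: "'v \<times> 'v" and l p :: 'v
  defines "\<psi> \<equiv> \<lambda>s. line_injection u w e s p"
    and "T \<equiv> {t \<in> {lo e..hi e}. L l \<le> line_injection u w e t l \<and> line_injection u w e t l \<le> U l}"
  assumes e: "e \<in> E" "e = (l, p) \<or> e = (p, l)" "l \<noteq> p" "p \<in> S"
    and away: "\<And>e'. e' \<in> E - {e} \<Longrightarrow> fst e' \<noteq> l \<and> snd e' \<noteq> l"
    and window: "{\<psi> tb..\<psi> ta} \<subseteq> \<psi> ` T" "\<psi> tb \<le> \<psi> ta" and "L p \<le> U p"
    and t': "t' \<in> angle_box (E - {e}) lo hi"
      "\<forall>v\<in>S - {l}. (L(p := L p - \<psi> ta)) v \<le> bus_injection u w (E - {e}) t' v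
                 \<and> bus_injection u w (E - {e}) t' v \<le> (U(p := U p - \<psi> tb)) v"
  shows "\<exists>t\<in>angle_box E lo hi. \<forall>v\<in>S. L v \<le> bus_injection u w E t v \<and> bus_injection u w E t v \<le> U v"
proof -
  let ?B' = "bus_injection u w (E - {e}) t' p"
  have at_p: "L p - \<psi> ta \<le> ?B'" "?B' \<le> U p - \<psi> tb"
    using t'(2)[rule_format, of p] e by auto
  define c where "c = max (\<psi> tb) (L p - ?B')"
  have "c \<in> {\<psi> tb..\<psi> ta}" and c: "L p \<le> ?B' + c" "?B' + c \<le> U p"
    using at_p window(2) \<open>L p \<le> U p\<close> unfolding c_def by auto
  with window(1) obtain t0 where "t0 \<in> T" "\<psi> t0 = c" by auto
  define t where "t = t'(e := t0)"
  have "t \<in> angle_box E lo hi"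
    using t'(1) \<open>t0 \<in> T\<close> unfolding t_def angle_box_def T_def by auto
  moreover have "L v \<le> bus_injection u w E t v \<and> bus_injection u w E t v \<le> U v" if "v \<in> S" for v
  proof -
    have rest: "bus_injection u w (E - {e}) t v = bus_injection u w (E - {e}) t' v"
      unfolding t_def by (rule bus_injection_cong) simp
    note remove = bus_injection_remove_leaf[OF e(1,2) away, where u=u and w=w and t=t]
    consider "v = l" | "v = p" | "v \<noteq> l" "v \<noteq> p" by blast
    then show ?thesis
    proof cases
      case 1
      then show ?thesis using remove(1) \<open>t0 \<in> T\<close> unfolding t_def T_def by simp
    next
      case 2
      then show ?thesis using remove(2)[of v] e(3) rest \<open>\<psi> t0 = c\<close> c unfolding t_def \<psi>_def by simp
    next
      case 3
      then show ?thesis using remove(2)[of v] rest t'(2)[rule_format, of v] that by simp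
    qed
  qed
  ultimately show ?thesis by blast
qed

lemma tree_bus_injection_between:
  fixes E :: "('v::finite \<times> 'v) set"
  assumes "tree_on S E"
    and cont: "\<And>e. e \<in> E \<Longrightarrow> continuous_on {lo e..hi e} (u e) \<and> continuous_on {lo e..hi e} (w e)"
    and mono: "\<And>e s t. e \<in> E \<Longrightarrow> lo e \<le> s \<Longrightarrow> s \<le> t \<Longrightarrow> t \<le> hi e \<Longrightarrow>
                 u e s \<le> u e t \<and> w e t \<le> w e s"
    and th: "th \<in> angle_box E lo hi" "\<forall>v\<in>S. L v \<le> bus_injection u w E th v"
    and tx: "tx \<in> angle_box E lo hi" "\<forall>v\<in>S. bus_injection u w E tx v \<le> U v"
    and LU: "\<forall>v\<in>S. L v \<le> U v"
  shows "\<exists>t\<in>angle_box E lo hi. \<forall>v\<in>S. L v \<le> bus_injection u w E t v \<and> bus_injection u w E t v \<le> U v"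
  using assms
proof (induction "card E" arbitrary: E S L U rule: less_induct)
  case less
  note tree = less.prems(1) and cont = less.prems(2) and mono = less.prems(3)
    and th = less.prems(4,5) and tx = less.prems(6,7) and LU = less.prems(8)
  show ?case
  proof (cases "E = {}")
    case True
    then show ?thesis using less.prems by (auto simp: bus_injection_def angle_box_def)
  next
    case False
    obtain l p e where "l \<in> S" "p \<in> S" "l \<noteq> p" "e \<in> E" and e: "e = (l, p) \<or> e = (p, l)"
      and away: "\<And>e'. e' \<in> E - {e} \<Longrightarrow> fst e' \<noteq> l \<and> snd e' \<noteq> l"
      and tree': "tree_on (S - {l}) (E - {e})"
      using tree_on_remove_leaf[OF tree False] by blast
    define \<psi> where "\<psi> s = line_injection u w e s p" for s
    define T where "T = {t \<in> {lo e..hi e}. L l \<le> line_injection u w e t l \<and> line_injection u w e t l \<le> U l}"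
    note remove = bus_injection_remove_leaf[OF \<open>e \<in> E\<close> e away, where u=u and w=w, folded \<psi>_def]
    have box: "th e \<in> {lo e..hi e}" "tx e \<in> {lo e..hi e}"
      using th(1) tx(1) \<open>e \<in> E\<close> unfolding angle_box_def by auto
    have leaf: "L l \<le> line_injection u w e (th e) l" "line_injection u w e (tx e) l \<le> U l" "L l \<le> U l"
      using th(2) tx(2) LU \<open>l \<in> S\<close> remove(1) by auto
    obtain ta tb where "ta \<in> T" "tb \<in> T"
      and \<psi>: "\<psi> (th e) \<le> \<psi> ta" "\<psi> tb \<le> \<psi> (tx e)" "\<psi> tb \<le> \<psi> ta"
      and window: "{\<psi> tb..\<psi> ta} \<subseteq> \<psi> ` T"
      by (rule leaf_line_window[OF e \<open>l \<noteq> p\<close> cont[OF \<open>e \<in> E\<close>, THEN conjunct1]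
          cont[OF \<open>e \<in> E\<close>, THEN conjunct2] mono[OF \<open>e \<in> E\<close>] box(1) leaf(1) box(2) leaf(2,3),
          folded \<psi>_def T_def])
    \<comment> \<open>The leaf line can contribute any value of \<open>[\<psi> tb, \<psi> ta]\<close> to the bus \<open>p\<close>.\<close>
    define L' where "L' = L(p := L p - \<psi> ta)"
    define U' where "U' = U(p := U p - \<psi> tb)"
    have "card (E - {e}) < card E" using \<open>e \<in> E\<close> by (rule card_Diff1_less[OF finite])
    moreover have "L' v \<le> bus_injection u w (E - {e}) th v" if "v \<in> S - {l}" for v
      using th(2) remove(2)[of v th] \<psi>(1) that unfolding L'_def by (cases "v = p") auto
    moreover have "bus_injection u w (E - {e}) tx v \<le> U' v" if "v \<in> S - {l}" for v
      using tx(2) remove(2)[of v tx] \<psi>(2) that unfolding U'_def by (cases "v = p") auto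
    moreover have "L' v \<le> U' v" if "v \<in> S - {l}" for v
      using LU \<psi>(3) that unfolding L'_def U'_def by auto
    moreover have "th \<in> angle_box (E - {e}) lo hi" "tx \<in> angle_box (E - {e}) lo hi"
      using th(1) tx(1) unfolding angle_box_def by auto
    ultimately have "\<exists>t'\<in>angle_box (E - {e}) lo hi. \<forall>v\<in>S - {l}.
        L' v \<le> bus_injection u w (E - {e}) t' v \<and> bus_injection u w (E - {e}) t' v \<le> U' v"
      using cont mono by (intro less.hyps[OF _ tree']) auto
    then show ?thesis
      using bus_injection_between_extend_leaf[OF \<open>e \<in> E\<close> e \<open>l \<noteq> p\<close> \<open>p \<in> S\<close> away,
          where u=u and w=w and lo=lo and hi=hi and L=L and U=U]
        window \<psi>(3) LU \<open>p \<in> S\<close> unfolding \<psi>_def T_def L'_def U'_def by blast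
  qed
qed

section \<open>Line flows within the angle bounds\<close>

lemma angle_bound_le_pi_half: "g \<ge> 0 \<Longrightarrow> angle_bound g b \<le> pi / 2"
  unfolding angle_bound_def using arctan_ubound[of "b / g"] by auto

lemma abs_sin_le_cos_within_angle_bound:
  fixes g b x :: real
  assumes "g \<ge> 0" "b \<ge> 0" and x: "\<bar>x\<bar> < angle_bound g b"
  shows "g * \<bar>sin x\<bar> \<le> b * cos x"
proof -
  have "\<bar>x\<bar> < pi / 2" using x angle_bound_le_pi_half[OF \<open>g \<ge> 0\<close>, of b] by linarith
  then have cos: "cos x > 0" "cos \<bar>x\<bar> = cos x"
    by (auto intro!: cos_gt_zero_pi simp: abs_less_iff cos_abs_real)
  have sin: "sin \<bar>x\<bar> = \<bar>sin x\<bar>"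
    using sin_ge_zero[of "\<bar>x\<bar>"] \<open>\<bar>x\<bar> < pi / 2\<close> by (cases "x \<ge> 0") auto
  show ?thesis
  proof (cases "g = 0")
    case True
    then show ?thesis using cos \<open>b \<ge> 0\<close> by simp
  next
    case False
    then have "g > 0" using \<open>g \<ge> 0\<close> by simp
    have "arctan (tan \<bar>x\<bar>) < arctan (b / g)"
      using x False \<open>\<bar>x\<bar> < pi / 2\<close> by (simp add: angle_bound_def arctan_tan)
    then have "sin \<bar>x\<bar> / cos \<bar>x\<bar> < b / g" by (simp add: arctan_less_iff tan_def)
    then show ?thesis using cos sin \<open>g > 0\<close> by (simp add: field_simps)
  qed
qed

lemma flow_monotone:
  assumes "V i > 0" "V k > 0" "g \<ge> 0" "b \<ge> 0"
    and "- angle_bound g b < s" "s \<le> t" "t < angle_bound g b"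
  shows "flow_ik V g b i k s \<le> flow_ik V g b i k t \<and> flow_ki V g b i k t \<le> flow_ki V g b i k s"
proof
  have VV: "V i * V k > 0" using assms by simp
  have sign: "\<bar>g * sin x\<bar> \<le> b * cos x" if "s < x" "x < t" for x
    using abs_sin_le_cos_within_angle_bound[of g b x] assms that by (simp add: abs_mult)
  show "flow_ik V g b i k s \<le> flow_ik V g b i k t"
  proof (rule DERIV_nonneg_imp_increasing_open[OF \<open>s \<le> t\<close>])
    fix x assume "s < x" "x < t"
    have "((\<lambda>s. flow_ik V g b i k s) has_real_derivative V i * V k * (b * cos x + g * sin x)) (at x)"
      unfolding flow_ik_def by (auto intro!: derivative_eq_intros simp: algebra_simps)
    moreover have "0 \<le> V i * V k * (b * cos x + g * sin x)"
      using sign[OF \<open>s < x\<close> \<open>x < t\<close>] VV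
      by (intro mult_nonneg_nonneg[OF less_imp_le[OF VV]]) (simp add: abs_le_iff)
    ultimately show "\<exists>y. ((\<lambda>s. flow_ik V g b i k s) has_real_derivative y) (at x) \<and> 0 \<le> y" by blast
  qed (unfold flow_ik_def, intro continuous_intros)
  show "flow_ki V g b i k t \<le> flow_ki V g b i k s"
  proof (rule DERIV_nonpos_imp_decreasing_open[OF \<open>s \<le> t\<close>])
    fix x assume "s < x" "x < t"
    have "((\<lambda>s. flow_ki V g b i k s) has_real_derivative V i * V k * (g * sin x - b * cos x)) (at x)"
      unfolding flow_ki_def by (auto intro!: derivative_eq_intros simp: algebra_simps)
    moreover have "V i * V k * (g * sin x - b * cos x) \<le> 0"
      using sign[OF \<open>s < x\<close> \<open>x < t\<close>] VV
      by (intro mult_nonneg_nonpos[OF less_imp_le[OF VV]]) (simp add: abs_le_iff)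
    ultimately show "\<exists>y. ((\<lambda>s. flow_ki V g b i k s) has_real_derivative y) (at x) \<and> y \<le> 0" by blast
  qed (unfold flow_ki_def, intro continuous_intros)
qed

lemma convex_comb_cos_le_sqrt:
  fixes t1 t2 \<theta> :: real
  assumes "0 \<le> \<theta>" "\<theta> \<le> 1"
  shows "\<theta> * cos t1 + (1 - \<theta>) * cos t2 \<le> sqrt (1 - (\<theta> * sin t1 + (1 - \<theta>) * sin t2)\<^sup>2)"
proof -
  define w where "w = \<theta> *\<^sub>R cis t1 + (1 - \<theta>) *\<^sub>R cis t2"
  have "norm w \<le> norm (\<theta> *\<^sub>R cis t1) + norm ((1 - \<theta>) *\<^sub>R cis t2)"
    unfolding w_def by (rule norm_triangle_ineq)
  also have "\<dots> = 1" using assms by simp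
  finally have "(Re w)\<^sup>2 + (Im w)\<^sup>2 \<le> 1"
    unfolding cmod_power2[symmetric] by (simp add: power_le_one)
  then show ?thesis
    unfolding w_def by (intro real_le_rsqrt) simp
qed

lemma sin_convex_comb_arcsin:
  fixes lo hi t1 t2 \<theta> :: real
  assumes "- (pi / 2) \<le> lo" "hi \<le> pi / 2" "t1 \<in> {lo..hi}" "t2 \<in> {lo..hi}" "0 \<le> \<theta>" "\<theta> \<le> 1"
  obtains \<tau> where "\<tau> \<in> {lo..hi}" "sin \<tau> = \<theta> * sin t1 + (1 - \<theta>) * sin t2"
    "\<theta> * cos t1 + (1 - \<theta>) * cos t2 \<le> cos \<tau>"
proof
  define z where "z = \<theta> * sin t1 + (1 - \<theta>) * sin t2"
  have sin_bounds: "sin lo \<le> sin t" "sin t \<le> sin hi" if "t \<in> {lo..hi}" for t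
    using that assms by (auto intro!: sin_monotone_2pi_le)
  have "sin lo = \<theta> * sin lo + (1 - \<theta>) * sin lo" by (simp add: algebra_simps)
  also have "\<dots> \<le> z"
    unfolding z_def using assms sin_bounds by (intro add_mono mult_left_mono) auto
  finally have lower: "sin lo \<le> z" .
  have "z \<le> \<theta> * sin hi + (1 - \<theta>) * sin hi"
    unfolding z_def using assms sin_bounds by (intro add_mono mult_left_mono) auto
  also have "\<dots> = sin hi" by (simp add: algebra_simps)
  finally have upper: "z \<le> sin hi" .
  have z1: "- 1 \<le> z" "z \<le> 1"
    using lower upper sin_ge_minus_one[of lo] sin_le_one[of hi] by linarith+
  have "arcsin (sin lo) \<le> arcsin z" "arcsin z \<le> arcsin (sin hi)"
    using lower upper z1 by (auto intro!: arcsin_le_arcsin)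
  moreover have "arcsin (sin lo) = lo" "arcsin (sin hi) = hi"
    using assms by (auto intro!: arcsin_sin)
  ultimately show "arcsin z \<in> {lo..hi}" by simp
  show "sin (arcsin z) = \<theta> * sin t1 + (1 - \<theta>) * sin t2"
    using z1 unfolding z_def by simp
  show "\<theta> * cos t1 + (1 - \<theta>) * cos t2 \<le> cos (arcsin z)"
    using convex_comb_cos_le_sqrt[OF assms(5,6)] z1 unfolding z_def by (simp add: cos_arcsin)
qed

lemma flows_le_convex_comb:
  fixes \<theta> \<tau> t1 t2 :: real
  assumes "V i > 0" "V k > 0" "g \<ge> 0"
    and sin: "sin \<tau> = \<theta> * sin t1 + (1 - \<theta>) * sin t2"
    and cos: "\<theta> * cos t1 + (1 - \<theta>) * cos t2 \<le> cos \<tau>"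
  shows "flow_ik V g b i k \<tau> \<le> \<theta> * flow_ik V g b i k t1 + (1 - \<theta>) * flow_ik V g b i k t2"
    and "flow_ki V g b i k \<tau> \<le> \<theta> * flow_ki V g b i k t1 + (1 - \<theta>) * flow_ki V g b i k t2"
proof -
  have "V i * V k * g * (\<theta> * cos t1 + (1 - \<theta>) * cos t2) \<le> V i * V k * g * cos \<tau>"
    using assms by (intro mult_left_mono) auto
  then show "flow_ik V g b i k \<tau> \<le> \<theta> * flow_ik V g b i k t1 + (1 - \<theta>) * flow_ik V g b i k t2"
    and "flow_ki V g b i k \<tau> \<le> \<theta> * flow_ki V g b i k t1 + (1 - \<theta>) * flow_ki V g b i k t2"
    unfolding flow_ik_def flow_ki_def sin by (simp_all add: algebra_simps)
qed

lemma bus_injection_le_convex_comb: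
  assumes "\<And>e. e \<in> E \<Longrightarrow> u e (\<tau> e) \<le> \<theta> * u e (t1 e) + (1 - \<theta>) * u e (t2 e)"
    and "\<And>e. e \<in> E \<Longrightarrow> w e (\<tau> e) \<le> \<theta> * w e (t1 e) + (1 - \<theta>) * w e (t2 e)"
  shows "bus_injection u w E \<tau> v \<le> \<theta> * bus_injection u w E t1 v + (1 - \<theta>) * bus_injection u w E t2 v"
proof -
  have "line_injection u w e (\<tau> e) v
      \<le> \<theta> * line_injection u w e (t1 e) v + (1 - \<theta>) * line_injection u w e (t2 e) v" if "e \<in> E" for e
    using assms[OF that] unfolding line_injection_def by (auto simp: algebra_simps)
  then show ?thesis
    unfolding bus_injection_def by (simp add: sum_distrib_left sum.distrib[symmetric] sum_mono)
qed

section \<open>The angle-constrained injection region\<close>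

definition flow_fst :: "('v \<Rightarrow> real) \<Rightarrow> ('v \<times> 'v \<Rightarrow> real) \<Rightarrow> ('v \<times> 'v \<Rightarrow> real) \<Rightarrow> 'v \<times> 'v \<Rightarrow> real \<Rightarrow> real"
  where "flow_fst V g b e = flow_ik V (g e) (b e) (fst e) (snd e)"

definition flow_snd :: "('v \<Rightarrow> real) \<Rightarrow> ('v \<times> 'v \<Rightarrow> real) \<Rightarrow> ('v \<times> 'v \<Rightarrow> real) \<Rightarrow> 'v \<times> 'v \<Rightarrow> real \<Rightarrow> real"
  where "flow_snd V g b e = flow_ki V (g e) (b e) (fst e) (snd e)"

definition injection_vector ::
  "('v::finite \<Rightarrow> real) \<Rightarrow> ('v \<times> 'v \<Rightarrow> real) \<Rightarrow> ('v \<times> 'v \<Rightarrow> real) \<Rightarrow> ('v \<times> 'v) set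
     \<Rightarrow> ('v \<times> 'v \<Rightarrow> real) \<Rightarrow> real ^ 'v" where
  "injection_vector V g b E t = (\<chi> v. bus_injection (flow_fst V g b) (flow_snd V g b) E t v)"

lemma A_map_eq_bus_injection:
  fixes E :: "('v::finite \<times> 'v) set"
  assumes anti: "\<And>i k. (i, k) \<in> E \<Longrightarrow> (k, i) \<notin> E"
    and f: "\<And>e. e \<in> E \<Longrightarrow> f e = u e (t e) \<and> f (snd e, fst e) = w e (t e)"
  shows "A_map E f $ v = bus_injection u w E t v"
proof -
  define K1 where "K1 = {k. (v, k) \<in> E}"
  define K2 where "K2 = {k. (k, v) \<in> E}"
  have "{k. adj E v k} = K1 \<union> K2" "K1 \<inter> K2 = {}"
    using anti unfolding K1_def K2_def adj_def by auto
  then have "A_map E f $ v = (\<Sum>k\<in>K1. f (v, k)) + (\<Sum>k\<in>K2. f (v, k))"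
    unfolding A_map_def by (simp add: sum.union_disjoint)
  also have "(\<Sum>k\<in>K1. f (v, k)) = (\<Sum>e\<in>{e\<in>E. fst e = v}. u e (t e))"
  proof -
    have "{e\<in>E. fst e = v} = Pair v ` K1" unfolding K1_def by force
    then show ?thesis
      using f unfolding K1_def by (simp add: sum.reindex inj_on_def)
  qed
  also have "(\<Sum>k\<in>K2. f (v, k)) = (\<Sum>e\<in>{e\<in>E. snd e = v}. w e (t e))"
  proof -
    have "{e\<in>E. snd e = v} = (\<lambda>k. (k, v)) ` K2" unfolding K2_def by force
    moreover have "f (v, k) = w (k, v) (t (k, v))" if "k \<in> K2" for k
      using f[of "(k, v)"] that unfolding K2_def by simp
    ultimately show ?thesis by (simp add: sum.reindex inj_on_def)
  qed
  also have "(\<Sum>e\<in>{e\<in>E. fst e = v}. u e (t e)) + (\<Sum>e\<in>{e\<in>E. snd e = v}. w e (t e))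
      = bus_injection u w E t v"
    unfolding bus_injection_def line_injection_def sum.distrib by (simp add: sum.inter_filter eq_commute)
  finally show ?thesis .
qed

lemma P_theta_eq_image_angle_box:
  fixes E :: "('v::finite \<times> 'v) set"
  assumes anti: "\<And>i k. (i, k) \<in> E \<Longrightarrow> (k, i) \<notin> E"
  shows "P_theta E V g b lo hi = injection_vector V g b E ` angle_box E lo hi"
proof (intro equalityI subsetI)
  fix x assume "x \<in> P_theta E V g b lo hi"
  then obtain f where f: "f \<in> F_theta E V g b lo hi" and x: "x = A_map E f"
    unfolding P_theta_def by auto
  have "\<forall>e\<in>E. \<exists>s. lo e \<le> s \<and> s \<le> hi e \<and> f e = flow_fst V g b e s \<and> f (snd e, fst e) = flow_snd V g b e s"
    using f unfolding F_theta_def flow_fst_def flow_snd_def by fastforce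
  then obtain t where t: "\<forall>e\<in>E. lo e \<le> t e \<and> t e \<le> hi e
      \<and> f e = flow_fst V g b e (t e) \<and> f (snd e, fst e) = flow_snd V g b e (t e)"
    by metis
  have "A_map E f $ v = bus_injection (flow_fst V g b) (flow_snd V g b) E t v" for v
    using t by (intro A_map_eq_bus_injection[OF anti]) auto
  then have "x = injection_vector V g b E t"
    unfolding x injection_vector_def vec_eq_iff by simp
  moreover have "t \<in> angle_box E lo hi" using t unfolding angle_box_def by simp
  ultimately show "x \<in> injection_vector V g b E ` angle_box E lo hi" by blast
next
  fix x assume "x \<in> injection_vector V g b E ` angle_box E lo hi"
  then obtain t where t: "t \<in> angle_box E lo hi" and x: "x = injection_vector V g b E t" by blast
  define f where "f = (\<lambda>(i, k). if (i, k) \<in> E then flow_fst V g b (i, k) (t (i, k))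
      else if (k, i) \<in> E then flow_snd V g b (k, i) (t (k, i)) else 0)"
  have f_E: "f e = flow_fst V g b e (t e) \<and> f (snd e, fst e) = flow_snd V g b e (t e)" if "e \<in> E" for e
    using anti that unfolding f_def by (cases e) auto
  have "f \<in> F_theta E V g b lo hi"
    unfolding F_theta_def
  proof (intro CollectI conjI allI impI ballI)
    fix e assume "e \<in> E"
    then show "case e of (i, k) \<Rightarrow> \<exists>s\<in>{lo (i, k)..hi (i, k)}.
        f (i, k) = flow_ik V (g (i, k)) (b (i, k)) i k s \<and> f (k, i) = flow_ki V (g (i, k)) (b (i, k)) i k s"
      using f_E t unfolding angle_box_def flow_fst_def flow_snd_def by (cases e) auto
  next
    fix i k assume "\<not> adj E i k"
    then show "f (i, k) = 0" unfolding f_def adj_def by auto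
  qed
  moreover have "A_map E f $ v = bus_injection (flow_fst V g b) (flow_snd V g b) E t v" for v
    using f_E by (intro A_map_eq_bus_injection[OF anti]) auto
  then have "A_map E f = x"
    unfolding x injection_vector_def vec_eq_iff by simp
  ultimately show "x \<in> P_theta E V g b lo hi" unfolding P_theta_def by blast
qed

lemma pareto_eq_if_dominated:
  assumes "P \<subseteq> C" and dom: "\<And>x. x \<in> C \<Longrightarrow> \<exists>y\<in>P. \<forall>i. y $ i \<le> x $ i"
  shows "pareto P = pareto C"
proof (intro equalityI subsetI)
  fix x assume x: "x \<in> pareto P"
  show "x \<in> pareto C"
    unfolding pareto_def
  proof (intro CollectI conjI notI)
    show "x \<in> C" using x \<open>P \<subseteq> C\<close> unfolding pareto_def by blast
    assume "\<exists>z\<in>C. (\<forall>i. z $ i \<le> x $ i) \<and> (\<exists>i. z $ i < x $ i)"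
    then obtain z j where z: "z \<in> C" "\<forall>i. z $ i \<le> x $ i" "z $ j < x $ j" by blast
    obtain y where y: "y \<in> P" "\<forall>i. y $ i \<le> z $ i" using dom[OF z(1)] by blast
    have "y $ i \<le> x $ i" for i using y(2) z(2) by (meson order_trans)
    moreover have "y $ j < x $ j" using y(2) z(3) by (meson le_less_trans)
    ultimately show False using x y(1) unfolding pareto_def by blast
  qed
next
  fix x assume x: "x \<in> pareto C"
  then obtain y where y: "y \<in> P" "\<forall>i. y $ i \<le> x $ i" using dom unfolding pareto_def by blast
  then have "\<not> (\<exists>i. y $ i < x $ i)" using x \<open>P \<subseteq> C\<close> unfolding pareto_def by blast
  then have "y = x" unfolding vec_eq_iff using y(2) by (meson antisym not_less)
  then show "x \<in> pareto P" using x y \<open>P \<subseteq> C\<close> unfolding pareto_def by blast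
qed

lemma convex_hull_injections_dominated:
  fixes E :: "('v::finite \<times> 'v) set"
  assumes V_pos: "\<forall>i. V i > 0" and g_nonneg: "\<forall>e\<in>E. g e \<ge> 0"
    and range: "\<forall>e\<in>E. - (pi / 2) \<le> lo e \<and> hi e \<le> pi / 2"
    and x: "x \<in> convex hull (injection_vector V g b E ` angle_box E lo hi)"
  obtains t where "t \<in> angle_box E lo hi" "\<And>v. injection_vector V g b E t $ v \<le> x $ v"
proof -
  define D where "D = {x. \<exists>t\<in>angle_box E lo hi. \<forall>v. injection_vector V g b E t $ v \<le> x $ v}"
  have "convex D"
  proof (rule convexI)
    fix y z :: "real ^ 'v" and \<theta> \<mu> :: real
    assume "y \<in> D" "z \<in> D" "0 \<le> \<theta>" "0 \<le> \<mu>" "\<theta> + \<mu> = 1"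
    then have "\<mu> = 1 - \<theta>" by simp
    from \<open>y \<in> D\<close> \<open>z \<in> D\<close> obtain t1 t2 where t12: "t1 \<in> angle_box E lo hi" "t2 \<in> angle_box E lo hi"
      and dom: "\<forall>v. injection_vector V g b E t1 $ v \<le> y $ v" "\<forall>v. injection_vector V g b E t2 $ v \<le> z $ v"
      unfolding D_def by blast
    have "\<exists>s. s \<in> {lo e..hi e} \<and> sin s = \<theta> * sin (t1 e) + (1 - \<theta>) * sin (t2 e)
        \<and> \<theta> * cos (t1 e) + (1 - \<theta>) * cos (t2 e) \<le> cos s" if "e \<in> E" for e
    proof -
      have "- (pi / 2) \<le> lo e" "hi e \<le> pi / 2" "t1 e \<in> {lo e..hi e}" "t2 e \<in> {lo e..hi e}" "\<theta> \<le> 1"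
        using range t12 that \<open>0 \<le> \<mu>\<close> \<open>\<theta> + \<mu> = 1\<close> unfolding angle_box_def by auto
      from sin_convex_comb_arcsin[OF this(1-4) \<open>0 \<le> \<theta>\<close> this(5)] show ?thesis by blast
    qed
    then obtain \<tau> where \<tau>: "\<forall>e\<in>E. \<tau> e \<in> {lo e..hi e} \<and> sin (\<tau> e) = \<theta> * sin (t1 e) + (1 - \<theta>) * sin (t2 e)
        \<and> \<theta> * cos (t1 e) + (1 - \<theta>) * cos (t2 e) \<le> cos (\<tau> e)"
      by metis
    have "injection_vector V g b E \<tau> $ v \<le> (\<theta> *\<^sub>R y + \<mu> *\<^sub>R z) $ v" for v
    proof -
      have "injection_vector V g b E \<tau> $ v
          \<le> \<theta> * injection_vector V g b E t1 $ v + (1 - \<theta>) * injection_vector V g b E t2 $ v"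
        unfolding injection_vector_def using \<tau> V_pos g_nonneg
        by (simp add: bus_injection_le_convex_comb flows_le_convex_comb flow_fst_def flow_snd_def)
      also have "\<dots> \<le> \<theta> * y $ v + (1 - \<theta>) * z $ v"
        using dom \<open>0 \<le> \<theta>\<close> \<open>0 \<le> \<mu>\<close> \<open>\<theta> + \<mu> = 1\<close> by (intro add_mono mult_left_mono) auto
      also have "\<dots> = (\<theta> *\<^sub>R y + \<mu> *\<^sub>R z) $ v"
        using \<open>\<mu> = 1 - \<theta>\<close> by simp
      finally show ?thesis .
    qed
    then show "\<theta> *\<^sub>R y + \<mu> *\<^sub>R z \<in> D"
      using \<tau> unfolding D_def angle_box_def by auto
  qed
  moreover have "injection_vector V g b E ` angle_box E lo hi \<subseteq> D"
    unfolding D_def by auto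
  ultimately have "x \<in> D" using x hull_minimal by blast
  then show thesis using that unfolding D_def by blast
qed

lemma feasible_injection_between:
  fixes E :: "('v::finite \<times> 'v) set"
  assumes tree: "is_tree E" and V_pos: "\<forall>i. V i > 0" and gb_nonneg: "\<forall>e\<in>E. g e \<ge> 0 \<and> b e \<ge> 0"
    and angle: "\<forall>e\<in>E. - angle_bound (g e) (b e) < lo e \<and> hi e < angle_bound (g e) (b e)"
    and th: "th \<in> angle_box E lo hi" "\<And>v. L v \<le> injection_vector V g b E th $ v"
    and tx: "tx \<in> angle_box E lo hi" "\<And>v. injection_vector V g b E tx $ v \<le> U v"
    and LU: "\<And>v. L v \<le> U v"
  obtains t where "t \<in> angle_box E lo hi"
    "\<And>v. L v \<le> injection_vector V g b E t $ v \<and> injection_vector V g b E t $ v \<le> U v"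
proof -
  have cont: "continuous_on {lo e..hi e} (flow_fst V g b e) \<and> continuous_on {lo e..hi e} (flow_snd V g b e)"
    for e unfolding flow_fst_def flow_snd_def flow_ik_def flow_ki_def by (intro conjI continuous_intros)
  have mono: "flow_fst V g b e s \<le> flow_fst V g b e t \<and> flow_snd V g b e t \<le> flow_snd V g b e s"
    if "e \<in> E" "lo e \<le> s" "s \<le> t" "t \<le> hi e" for e s t
    unfolding flow_fst_def flow_snd_def using V_pos gb_nonneg angle that
    by (intro flow_monotone) auto
  have "\<exists>t\<in>angle_box E lo hi. \<forall>v\<in>UNIV.
      L v \<le> bus_injection (flow_fst V g b) (flow_snd V g b) E t v
      \<and> bus_injection (flow_fst V g b) (flow_snd V g b) E t v \<le> U v"
    using th(2) tx(2) LU
    by (intro tree_bus_injection_between[OF is_tree_imp_tree_on[OF tree] cont mono th(1) _ tx(1)])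
      (auto simp: injection_vector_def)
  then show thesis using that unfolding injection_vector_def by auto
qed

theorem lemma3:
  fixes E :: "('v::finite \<times> 'v) set"
    and V :: "'v \<Rightarrow> real"
    and g b thlo thhi :: "'v \<times> 'v \<Rightarrow> real"
    and Plo Phi :: "'v \<Rightarrow> real"
  assumes tree: "is_tree E"
    and V_pos: "\<forall>i. V i > 0"
    and gb_nonneg: "\<forall>e \<in> E. g e \<ge> 0 \<and> b e \<ge> 0"
    and lo_range: "\<forall>e \<in> E. - pi \<le> thlo e \<and> thlo e \<le> 0"
    and hi_range: "\<forall>e \<in> E. 0 \<le> thhi e \<and> thhi e \<le> pi"
    and angle: "\<forall>e \<in> E. - angle_bound (g e) (b e) < thlo e \<and> thlo e \<le> thhi e
                        \<and> thhi e < angle_bound (g e) (b e)"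
    and nonempty: "P_theta E V g b thlo thhi \<inter> P_P Plo Phi \<noteq> {}"
  shows "pareto (P_theta E V g b thlo thhi \<inter> P_P Plo Phi)
       = pareto (convex hull (P_theta E V g b thlo thhi) \<inter> P_P Plo Phi)"
proof -
  let ?inj = "injection_vector V g b E" and ?R = "angle_box E thlo thhi"
  have P_theta: "P_theta E V g b thlo thhi = ?inj ` ?R"
    using tree unfolding is_tree_def by (intro P_theta_eq_image_angle_box) blast
  from nonempty obtain th where th: "th \<in> ?R" "?inj th \<in> P_P Plo Phi"
    unfolding P_theta by blast
  have "\<exists>y\<in>?inj ` ?R \<inter> P_P Plo Phi. \<forall>i. y $ i \<le> x $ i"
    if x: "x \<in> convex hull (?inj ` ?R) \<inter> P_P Plo Phi" for x
  proof -
    have "- (pi / 2) \<le> thlo e \<and> thhi e \<le> pi / 2" if "e \<in> E" for e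
      using angle angle_bound_le_pi_half[of "g e" "b e"] gb_nonneg that by force
    then obtain tx where "tx \<in> ?R" "\<And>v. ?inj tx $ v \<le> x $ v"
      using convex_hull_injections_dominated[of V E g thlo thhi x b] V_pos gb_nonneg x by blast
    then obtain t where "t \<in> ?R" "\<And>v. Plo v \<le> ?inj t $ v \<and> ?inj t $ v \<le> x $ v"
      using feasible_injection_between[OF tree V_pos gb_nonneg _ th(1), where L=Plo and U="\<lambda>v. x $ v"]
        angle th(2) x unfolding P_P_def by auto
    then show ?thesis using x unfolding P_P_def by (auto intro: order_trans)
  qed
  then show ?thesis
    unfolding P_theta by (intro pareto_eq_if_dominated) (auto intro: hull_subset[THEN subsetD])
qed
end
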